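(* Let $G$ be a simple, undirected, connected graph on $N$ vertices with edge set $E$ and degree sequence $d_1\le d_2\le\cdots\le d_N$. If $d_j=1$ for $1\le j\le M$, where $M<N$, then $$R^+(G)\ge N(N-4)+2|E|\left[M+\frac{(N-M)^2}{2|E|-M}\right].$$
   Context: For vertices $i,j$ of $G$, $R_{ij}$ denotes the effective resistance between $i$ and $j$ when every edge of $G$ is a unit resistor. The additive degree-Kirchhoff index is $R^+(G)=\sum_{i<j}(d_i+d_j)R_{ij}$, where $d_i$ is the degree of vertex $i$. *)

theory Defs
  imports Main "HOL-Library.Disjoint_Sets" Complex_Main
begin

definition simple_graph :: "'a set \<Rightarrow> 'a set set \<Rightarrow> bool" where
  "simple_graph V E \<longleftrightarrow> finite V \<and>
     (\<forall>e\<in>E. \<exists>x y. e = {x, y} \<and> x \<noteq> y \<and> x \<in> V \<and> y \<in> V)"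

definition adj :: "'a set set \<Rightarrow> 'a \<Rightarrow> 'a \<Rightarrow> bool" where
  "adj E x y \<longleftrightarrow> {x, y} \<in> E"

definition connected_graph :: "'a set \<Rightarrow> 'a set set \<Rightarrow> bool" where
  "connected_graph V E \<longleftrightarrow> (\<forall>x\<in>V. \<forall>y\<in>V. (adj E)\<^sup>*\<^sup>* x y)"

definition neighbors :: "'a set set \<Rightarrow> 'a \<Rightarrow> 'a set" where
  "neighbors E x = {y. {x, y} \<in> E}"

definition degree :: "'a set set \<Rightarrow> 'a \<Rightarrow> nat" where
  "degree E x = card (neighbors E x)"

definition laplacian :: "'a set set \<Rightarrow> ('a \<Rightarrow> real) \<Rightarrow> 'a \<Rightarrow> real" where
  "laplacian E v x = real (degree E x) * v x - (\<Sum>y\<in>neighbors E x. v y)"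

text \<open>Effective resistance (unit resistors): inject unit current at i, extract it at j;
  R_ij is the resulting potential difference v_i - v_j, where L v = e_i - e_j on V.
  For a connected graph this is well defined (v unique up to an additive constant).\<close>
definition eff_res :: "'a set \<Rightarrow> 'a set set \<Rightarrow> 'a \<Rightarrow> 'a \<Rightarrow> real" where
  "eff_res V E i j = (THE r. \<exists>v. (\<forall>x\<in>V. laplacian E v x =
        (if x = i then 1 else 0) - (if x = j then 1 else 0)) \<and> r = v i - v j)"

definition additive_degree_kirchhoff :: "('a::linorder) set \<Rightarrow> 'a set set \<Rightarrow> real" where
  "additive_degree_kirchhoff V E =
     (\<Sum>(i, j)\<in>{(i, j). i \<in> V \<and> j \<in> V \<and> i < j}.
        real (degree E i + degree E j) * eff_res V E i j)"

end

theory Submission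
  imports Defs "Jordan_Normal_Form.Determinant"
begin

(* Let v solve L v = e_i - e_j. Then R_ij = v_i - v_j is the Dirichlet energy <v, L v>, and
   Cauchy-Schwarz for the Dirichlet form gives R_ij \<ge> 1 / <u, L u> for every potential u with
   <u, L v> = u_i - u_j = 1. The test potential that is 1 at i, 0 at j and constant elsewhere
   yields R_ij \<ge> (d_i + d_j - 2 a_ij) / (d_i d_j). Weighting these bounds by d_i + d_j and summing
   over all pairs gives R^+ \<ge> D S + N^2 - 4N, where D = \<Sum> d_i = 2|E| and S = \<Sum> 1/d_i.
   The M pendant vertices contribute M to S, and the arithmetic-harmonic mean inequality on the
   other N - M vertices bounds the rest of S below by (N - M)^2 / (D - M). *)

hide_const (open) Polynomial.degree

lemma real_card_eq_card_Diff_singleton: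
  assumes "finite A"
  shows "real (card A) = real (card (A - {j})) + of_bool (j \<in> A)"
proof (cases "j \<in> A")
  case True
  then have "card A = Suc (card (A - {j}))" using assms by (intro card.remove)
  then show ?thesis using True by simp
qed simp

lemma sum_if_eq:
  fixes p q :: real
  assumes "finite A"
  shows "(\<Sum>y\<in>A. if y = j then p else q) = of_bool (j \<in> A) * p + real (card (A - {j})) * q"
proof (cases "j \<in> A")
  case True
  then have "(\<Sum>y\<in>A. if y = j then p else q) = p + (\<Sum>y\<in>A - {j}. if y = j then p else q)"
    using assms by (simp add: sum.remove)
  then show ?thesis using True by simp
next
  case False
  then have "(\<Sum>y\<in>A. if y = j then p else q) = (\<Sum>y\<in>A. q)" by (intro sum.cong) auto
  then show ?thesis using False by simp
qed

lemma sum_ordered_pairs: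
  fixes g :: "'a::linorder \<Rightarrow> 'a \<Rightarrow> real"
  assumes fin: "finite V" and sym: "\<And>i j. i \<in> V \<Longrightarrow> j \<in> V \<Longrightarrow> g i j = g j i"
  shows "(\<Sum>(i, j)\<in>{(i, j). i \<in> V \<and> j \<in> V \<and> i < j}. g i j)
    = ((\<Sum>i\<in>V. \<Sum>j\<in>V. g i j) - (\<Sum>i\<in>V. g i i)) / 2"
proof -
  let ?lt = "\<lambda>i j. if i < j then g i j else 0"
  have "{(i, j). i \<in> V \<and> j \<in> V \<and> i < j} = Sigma V (\<lambda>i. {j \<in> V. i < j})" by auto
  then have upper: "(\<Sum>(i, j)\<in>{(i, j). i \<in> V \<and> j \<in> V \<and> i < j}. g i j) = (\<Sum>i\<in>V. \<Sum>j\<in>V. ?lt i j)"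
    using fin by (simp add: sum.Sigma[symmetric] sum.inter_filter)
  have lower: "(\<Sum>i\<in>V. \<Sum>j\<in>V. ?lt j i) = (\<Sum>i\<in>V. \<Sum>j\<in>V. ?lt i j)"
    by (rule sum.swap)
  have "g i j = ?lt i j + ?lt j i + (if i = j then g i j else 0)" if "i \<in> V" "j \<in> V" for i j
    using sym[OF that] by (cases i j rule: linorder_cases) auto
  then have "(\<Sum>i\<in>V. \<Sum>j\<in>V. g i j)
      = (\<Sum>i\<in>V. \<Sum>j\<in>V. ?lt i j + ?lt j i + (if i = j then g i j else 0))"
    by (intro sum.cong) auto
  also have "\<dots> = (\<Sum>i\<in>V. \<Sum>j\<in>V. ?lt i j) + (\<Sum>i\<in>V. \<Sum>j\<in>V. ?lt j i) + (\<Sum>i\<in>V. g i i)"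
    using fin by (simp add: sum.distrib)
  finally show ?thesis using upper lower by simp
qed

lemma card_squared_le_sum_inverse_mult_sum:
  fixes f :: "'a \<Rightarrow> real"
  assumes "finite A" and pos: "\<And>x. x \<in> A \<Longrightarrow> f x > 0"
  shows "real (card A)^2 \<le> (\<Sum>x\<in>A. 1 / f x) * (\<Sum>x\<in>A. f x)"
proof -
  have "2 \<le> f y / f x + f x / f y" if "x \<in> A" "y \<in> A" for x y
  proof -
    have "2 * (f x * f y) \<le> f x * f x + f y * f y"
      using sum_squares_bound[of "f x" "f y"] by (simp add: power2_eq_square)
    then show ?thesis using pos[OF that(1)] pos[OF that(2)] by (simp add: field_simps)
  qed
  then have "(\<Sum>x\<in>A. \<Sum>y\<in>A. 2) \<le> (\<Sum>x\<in>A. \<Sum>y\<in>A. f y / f x + f x / f y)"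
    by (intro sum_mono) auto
  also have "\<dots> = (\<Sum>x\<in>A. \<Sum>y\<in>A. f y / f x) + (\<Sum>x\<in>A. \<Sum>y\<in>A. f x / f y)"
    by (simp add: sum.distrib)
  also have "(\<Sum>x\<in>A. \<Sum>y\<in>A. f x / f y) = (\<Sum>x\<in>A. \<Sum>y\<in>A. f y / f x)"
    by (rule sum.swap)
  finally have "2 * real (card A)^2 \<le> 2 * (\<Sum>x\<in>A. \<Sum>y\<in>A. f y / f x)"
    by (simp add: power2_eq_square)
  moreover have "(\<Sum>x\<in>A. 1 / f x) * (\<Sum>x\<in>A. f x) = (\<Sum>x\<in>A. \<Sum>y\<in>A. f y / f x)"
    by (simp add: sum_product)
  ultimately show ?thesis by linarith
qed

lemma sum_inverse_ge_with_pendants: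
  fixes f :: "'a \<Rightarrow> real"
  assumes fin: "finite A" and pos: "\<And>x. x \<in> A \<Longrightarrow> f x > 0"
    and P: "P \<subseteq> A" "\<And>x. x \<in> P \<Longrightarrow> f x = 1" and less: "card P < card A"
  shows "real (card P) + (real (card A) - real (card P))^2 / ((\<Sum>x\<in>A. f x) - real (card P))
    \<le> (\<Sum>x\<in>A. 1 / f x)"
proof -
  have finP: "finite P" using fin P(1) by (rule finite_subset[rotated])
  have split: "(\<Sum>x\<in>A. g x) = real (card P) + (\<Sum>x\<in>A - P. g x)"
    if "\<And>x. x \<in> P \<Longrightarrow> g x = 1" for g :: "'a \<Rightarrow> real"
    using sum.subset_diff[OF P(1) fin, of g] that by simp
  have card_rest: "real (card (A - P)) = real (card A) - real (card P)"
    using card_Diff_subset[OF finP P(1)] card_mono[OF fin P(1)] by simp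
  have "A - P \<noteq> {}" using less card_mono[OF finP, of A] by auto
  then have "(\<Sum>x\<in>A - P. f x) > 0" using fin pos by (intro sum_pos) auto
  moreover have "real (card (A - P))^2 \<le> (\<Sum>x\<in>A - P. 1 / f x) * (\<Sum>x\<in>A - P. f x)"
    using fin pos by (intro card_squared_le_sum_inverse_mult_sum) auto
  ultimately have "real (card (A - P))^2 / (\<Sum>x\<in>A - P. f x) \<le> (\<Sum>x\<in>A - P. 1 / f x)"
    by (simp add: pos_divide_le_eq)
  then show ?thesis using split[of f] split[of "\<lambda>x. 1 / f x"] P(2) card_rest by simp
qed

lemma weighted_squares_at_balance:
  fixes a b :: real
  assumes "a + b \<noteq> 0"
  shows "a * (1 - a / (a + b))^2 + b * (a / (a + b))^2 = a * b / (a + b)"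
proof -
  have "1 - a / (a + b) = b / (a + b)" using assms by (simp add: field_simps)
  then have "a * (1 - a / (a + b))^2 + b * (a / (a + b))^2 = (a * b^2 + b * a^2) / (a + b)^2"
    by (simp add: power_divide add_divide_distrib)
  also have "a * b^2 + b * a^2 = a * b * (a + b)" by (simp add: power2_eq_square algebra_simps)
  finally show ?thesis using assms by (simp add: power2_eq_square)
qed

lemma mat_vec_solvable_if_trivial_kernel:
  fixes M :: "'a::field mat"
  assumes M: "M \<in> carrier_mat n n"
    and kernel: "\<And>w. w \<in> carrier_vec n \<Longrightarrow> M *\<^sub>v w = 0\<^sub>v n \<Longrightarrow> w = 0\<^sub>v n"
    and b: "b \<in> carrier_vec n"
  shows "\<exists>w\<in>carrier_vec n. M *\<^sub>v w = b"
proof -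
  have "det M \<noteq> 0" using det_0_iff_vec_prod_zero[OF M] kernel by blast
  then obtain B where B: "B \<in> carrier_mat n n" "M * B = 1\<^sub>m n"
    using det_non_zero_imp_unit[OF M] by (auto simp: Units_def ring_mat_def)
  then have "M *\<^sub>v (B *\<^sub>v b) = b"
    using M b by (simp add: assoc_mult_mat_vec[symmetric, of M n n B n])
  with B b show ?thesis by (intro bexI[of _ "B *\<^sub>v b"]) auto
qed

lemma square_system_solvable:
  fixes K :: "'a \<Rightarrow> 'a \<Rightarrow> real"
  assumes fin: "finite A"
    and kernel: "\<And>v. \<forall>x\<in>A. (\<Sum>y\<in>A. K x y * v y) = 0 \<Longrightarrow> \<forall>x\<in>A. v x = 0"
  shows "\<exists>v. \<forall>x\<in>A. (\<Sum>y\<in>A. K x y * v y) = b x"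
proof -
  define n where "n = card A"
  obtain \<iota> where bij: "bij_betw \<iota> {0..<n} A"
    using ex_bij_betw_nat_finite[OF fin] n_def by blast
  define M where "M = mat n n (\<lambda>(p, q). K (\<iota> p) (\<iota> q))"
  define vec_of where "vec_of v = vec n (\<lambda>q. v (\<iota> q))" for v :: "'a \<Rightarrow> real"
  define fun_of where "fun_of w y = w $ inv_into {0..<n} \<iota> y" for w :: "real vec" and y
  have fun_of_index: "fun_of w (\<iota> q) = w $ q" if "q < n" for w q
    using that bij by (simp add: fun_of_def bij_betw_inv_into_left)
  have vec_fun: "vec_of (fun_of w) = w" if "w \<in> carrier_vec n" for w
    using that by (intro eq_vecI) (auto simp: vec_of_def fun_of_index)
  have M_vec: "(M *\<^sub>v w) $ p = (\<Sum>y\<in>A. K (\<iota> p) y * fun_of w y)"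
    if "w \<in> carrier_vec n" "p < n" for w p
  proof -
    have "(M *\<^sub>v w) $ p = (\<Sum>q\<in>{0..<n}. K (\<iota> p) (\<iota> q) * fun_of w (\<iota> q))"
      using that by (simp add: M_def mult_mat_vec_def scalar_prod_def fun_of_index)
    also have "\<dots> = (\<Sum>y\<in>A. K (\<iota> p) y * fun_of w y)"
      by (rule sum.reindex_bij_betw[OF bij])
    finally show ?thesis .
  qed
  have index: "\<exists>p<n. x = \<iota> p" if "x \<in> A" for x
    using that bij by (auto simp: bij_betw_def image_iff)
  have "\<exists>w\<in>carrier_vec n. M *\<^sub>v w = vec_of b"
  proof (rule mat_vec_solvable_if_trivial_kernel)
    fix w :: "real vec" assume w: "w \<in> carrier_vec n" "M *\<^sub>v w = 0\<^sub>v n"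
    have "\<forall>x\<in>A. (\<Sum>y\<in>A. K x y * fun_of w y) = 0"
      using M_vec[OF w(1)] w(2) index by force
    then have "\<forall>x\<in>A. fun_of w x = 0" by (rule kernel)
    then have "vec_of (fun_of w) = 0\<^sub>v n"
      using bij by (intro eq_vecI) (auto simp: vec_of_def bij_betw_def)
    with vec_fun[OF w(1)] show "w = 0\<^sub>v n" by simp
  qed (simp_all add: M_def vec_of_def)
  then obtain w where "w \<in> carrier_vec n" "M *\<^sub>v w = vec_of b" by blast
  then have "\<forall>x\<in>A. (\<Sum>y\<in>A. K x y * fun_of w y) = b x"
    using M_vec index by (force simp: vec_of_def)
  then show ?thesis by blast
qed

section \<open>The Laplacian of a simple graph\<close>

locale ugraph =
  fixes V :: "'a set" and E :: "'a set set"
  assumes simple: "simple_graph V E"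
begin

abbreviation deg :: "'a \<Rightarrow> real" where
  "deg x \<equiv> real (degree E x)"

lemma finite_vertices: "finite V"
  using simple by (simp add: simple_graph_def)

lemma edge_endpoints: "{x, y} \<in> E \<Longrightarrow> x \<in> V \<and> y \<in> V \<and> x \<noteq> y"
  using simple unfolding simple_graph_def by (fastforce simp: doubleton_eq_iff)

lemma finite_edges: "finite E"
proof -
  have "E \<subseteq> Pow V" using simple by (auto simp: simple_graph_def)
  then show ?thesis using finite_vertices by (simp add: finite_subset)
qed

lemma neighbors_subset: "neighbors E x \<subseteq> V"
  using edge_endpoints by (auto simp: neighbors_def)

lemma finite_neighbors: "finite (neighbors E x)"
  using neighbors_subset finite_vertices by (rule finite_subset)

lemma self_notin_neighbors: "x \<notin> neighbors E x"
  using edge_endpoints[of x x] by (auto simp: neighbors_def)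

lemma neighbors_commute: "y \<in> neighbors E x \<longleftrightarrow> x \<in> neighbors E y"
  by (auto simp: neighbors_def insert_commute)

lemma mem_neighbors_iff_adj: "y \<in> neighbors E x \<longleftrightarrow> adj E x y"
  by (simp add: neighbors_def adj_def)

lemma sum_neighbors_commute:
  "(\<Sum>x\<in>V. \<Sum>y\<in>neighbors E x. f x y) = (\<Sum>x\<in>V. \<Sum>y\<in>neighbors E x. f y x)"
proof -
  have "(\<Sum>x\<in>V. \<Sum>y\<in>neighbors E x. f x y) = (\<Sum>x\<in>V. \<Sum>y\<in>{y \<in> V. y \<in> neighbors E x}. f x y)"
    using neighbors_subset by (intro sum.cong) auto
  also have "\<dots> = (\<Sum>y\<in>V. \<Sum>x\<in>{x \<in> V. y \<in> neighbors E x}. f x y)"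
    by (rule sum.swap_restrict[OF finite_vertices finite_vertices])
  also have "\<dots> = (\<Sum>y\<in>V. \<Sum>x\<in>neighbors E y. f x y)"
    using neighbors_subset neighbors_commute by (intro sum.cong) auto
  finally show ?thesis .
qed

lemma sum_degree_eq_two_card_edges: "(\<Sum>x\<in>V. degree E x) = 2 * card E"
proof -
  define arcs where "arcs e = {(x, y). {x, y} = e}" for e :: "'a set"
  have card_arcs: "card (arcs e) = 2" if "e \<in> E" for e
  proof -
    obtain a b where "e = {a, b}" "a \<noteq> b" using \<open>e \<in> E\<close> simple by (auto simp: simple_graph_def)
    then have "arcs e = {(a, b), (b, a)}" by (auto simp: arcs_def doubleton_eq_iff)
    with \<open>a \<noteq> b\<close> show ?thesis by simp
  qed
  have "Sigma V (neighbors E) = (\<Union>e\<in>E. arcs e)"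
    by (auto simp: arcs_def neighbors_def dest: edge_endpoints)
  moreover have "(\<Sum>x\<in>V. degree E x) = card (Sigma V (neighbors E))"
    using finite_vertices finite_neighbors by (simp add: Defs.degree_def)
  moreover have "card (\<Union>e\<in>E. arcs e) = (\<Sum>e\<in>E. card (arcs e))"
    using finite_edges card_arcs by (intro card_UN_disjoint) (auto intro: card_ge_0_finite simp: arcs_def)
  ultimately show ?thesis using card_arcs by simp
qed

lemma laplacian_eq_sum_diff: "laplacian E v x = (\<Sum>y\<in>neighbors E x. v x - v y)"
  by (simp add: laplacian_def Defs.degree_def sum_subtractf)

lemma laplacian_diff_scale:
  "laplacian E (\<lambda>x. u x - s * v x) x = laplacian E u x - s * laplacian E v x"
proof -
  have "laplacian E (\<lambda>x. u x - s * v x) x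
      = (\<Sum>y\<in>neighbors E x. (u x - u y) - s * (v x - v y))"
    unfolding laplacian_eq_sum_diff by (intro sum.cong) (auto simp: algebra_simps)
  also have "\<dots> = (\<Sum>y\<in>neighbors E x. u x - u y) - s * (\<Sum>y\<in>neighbors E x. v x - v y)"
    by (simp only: sum_subtractf[of "\<lambda>y. u x - u y"] sum_distrib_left)
  finally show ?thesis by (simp only: laplacian_eq_sum_diff)
qed

definition dirichlet_form :: "('a \<Rightarrow> real) \<Rightarrow> ('a \<Rightarrow> real) \<Rightarrow> real" where
  "dirichlet_form u v = (\<Sum>x\<in>V. u x * laplacian E v x)"

lemma dirichlet_form_eq_edge_sum:
  "dirichlet_form u v = (\<Sum>x\<in>V. \<Sum>y\<in>neighbors E x. (u x - u y) * (v x - v y)) / 2"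
proof -
  have "dirichlet_form u v = (\<Sum>x\<in>V. \<Sum>y\<in>neighbors E x. u x * (v x - v y))"
    by (simp add: dirichlet_form_def laplacian_eq_sum_diff sum_distrib_left)
  moreover have "\<dots> = (\<Sum>x\<in>V. \<Sum>y\<in>neighbors E x. u y * (v y - v x))"
    by (rule sum_neighbors_commute)
  ultimately have "2 * dirichlet_form u v
      = (\<Sum>x\<in>V. \<Sum>y\<in>neighbors E x. u x * (v x - v y) + u y * (v y - v x))"
    by (simp add: sum.distrib)
  also have "\<dots> = (\<Sum>x\<in>V. \<Sum>y\<in>neighbors E x. (u x - u y) * (v x - v y))"
    by (simp add: algebra_simps)
  finally show ?thesis by simp
qed

lemma dirichlet_form_commute: "dirichlet_form u v = dirichlet_form v u"
  by (simp add: dirichlet_form_eq_edge_sum mult.commute)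

lemma dirichlet_form_self_nonneg: "dirichlet_form u u \<ge> 0"
  by (simp add: dirichlet_form_eq_edge_sum sum_nonneg)

lemma sum_laplacian_eq_0: "(\<Sum>x\<in>V. laplacian E v x) = 0"
  using dirichlet_form_eq_edge_sum[of "\<lambda>_. 1" v] by (simp add: dirichlet_form_def)

lemma sum_eq_0_if_laplacian_add_sum:
  assumes "\<forall>x\<in>V. laplacian E v x + (\<Sum>y\<in>V. v y) = b x" and "(\<Sum>x\<in>V. b x) = 0"
  shows "(\<Sum>y\<in>V. v y) = 0"
proof (cases "V = {}")
  case False
  have "(\<Sum>x\<in>V. b x) = (\<Sum>x\<in>V. laplacian E v x + (\<Sum>y\<in>V. v y))"
    using assms(1) by (intro sum.cong) auto
  also have "\<dots> = (\<Sum>x\<in>V. laplacian E v x) + real (card V) * (\<Sum>y\<in>V. v y)"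
    by (simp add: sum.distrib)
  finally have "(\<Sum>x\<in>V. b x) = (\<Sum>x\<in>V. laplacian E v x) + real (card V) * (\<Sum>y\<in>V. v y)" .
  then have "real (card V) * (\<Sum>y\<in>V. v y) = 0" using assms(2) by (simp add: sum_laplacian_eq_0)
  moreover have "card V > 0" using False finite_vertices by (simp add: card_gt_0_iff)
  ultimately show ?thesis by simp
qed simp

lemma dirichlet_form_diff_scale:
  "dirichlet_form (\<lambda>x. v x - s * u x) (\<lambda>x. v x - s * u x)
    = dirichlet_form v v - 2 * s * dirichlet_form u v + s^2 * dirichlet_form u u"
proof -
  have "dirichlet_form (\<lambda>x. v x - s * u x) (\<lambda>x. v x - s * u x)
      = dirichlet_form v v - s * dirichlet_form u v - s * dirichlet_form v u
        + s^2 * dirichlet_form u u"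
    unfolding dirichlet_form_def laplacian_diff_scale
    by (simp add: algebra_simps sum.distrib sum_subtractf sum_distrib_left power2_eq_square)
  then show ?thesis using dirichlet_form_commute[of v u] by simp
qed

text \<open>Cauchy-Schwarz for the Dirichlet form, in the shape of Thomson's principle.\<close>

lemma dirichlet_form_inverse_le:
  assumes uv: "dirichlet_form u v = 1" and pos: "dirichlet_form u u > 0"
  shows "1 / dirichlet_form u u \<le> dirichlet_form v v"
proof -
  define s where "s = 1 / dirichlet_form u u"
  have "0 \<le> dirichlet_form (\<lambda>x. v x - s * u x) (\<lambda>x. v x - s * u x)"
    by (rule dirichlet_form_self_nonneg)
  also have "\<dots> = dirichlet_form v v - 1 / dirichlet_form u u"
    unfolding dirichlet_form_diff_scale uv using pos by (simp add: s_def power2_eq_square)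
  finally show ?thesis by simp
qed

lemma laplacian_zero_imp_eq_neighbor:
  assumes harmonic: "\<forall>x\<in>V. laplacian E u x = 0" and "x \<in> V" "y \<in> neighbors E x"
  shows "u x = u y"
proof -
  have "(\<Sum>x\<in>V. \<Sum>y\<in>neighbors E x. (u x - u y) * (u x - u y)) = 0"
    using dirichlet_form_eq_edge_sum[of u u] harmonic by (simp add: dirichlet_form_def)
  then have "\<forall>x\<in>V. \<forall>y\<in>neighbors E x. (u x - u y) * (u x - u y) = 0"
    using finite_vertices finite_neighbors
    by (simp add: sum_nonneg_eq_0_iff sum_nonneg)
  with assms(2,3) show ?thesis by simp
qed

definition dipole :: "'a \<Rightarrow> 'a \<Rightarrow> 'a \<Rightarrow> real" where
  "dipole i j x = (if x = i then 1 else 0) - (if x = j then 1 else 0)"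

lemma dirichlet_form_dipole:
  assumes "\<forall>x\<in>V. laplacian E v x = dipole i j x" "i \<in> V" "j \<in> V"
  shows "dirichlet_form u v = u i - u j"
proof -
  have "dirichlet_form u v = (\<Sum>x\<in>V. (if x = i then u x else 0) - (if x = j then u x else 0))"
    using assms(1) by (auto simp: dirichlet_form_def dipole_def intro: sum.cong)
  then show ?thesis using assms(2,3) finite_vertices by (simp add: sum_subtractf)
qed

definition test_potential :: "'a \<Rightarrow> 'a \<Rightarrow> real \<Rightarrow> 'a \<Rightarrow> real" where
  "test_potential i j t x = (if x = i then 1 else if x = j then 0 else t)"

lemma laplacian_test_potential_source:
  assumes "i \<noteq> j"
  shows "laplacian E (test_potential i j t) i
    = of_bool (adj E i j) + real (card (neighbors E i - {j})) * (1 - t)"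
proof -
  have "laplacian E (test_potential i j t) i = (\<Sum>y\<in>neighbors E i. if y = j then 1 else 1 - t)"
    unfolding laplacian_eq_sum_diff using self_notin_neighbors[of i] assms
    by (intro sum.cong) (auto simp: test_potential_def)
  then show ?thesis by (simp add: sum_if_eq finite_neighbors mem_neighbors_iff_adj)
qed

lemma laplacian_test_potential_sink:
  assumes "i \<noteq> j"
  shows "laplacian E (test_potential i j t) j
    = - (of_bool (adj E i j) + real (card (neighbors E j - {i})) * t)"
proof -
  have "laplacian E (test_potential i j t) j = (\<Sum>y\<in>neighbors E j. if y = i then - 1 else - t)"
    unfolding laplacian_eq_sum_diff using self_notin_neighbors[of j] assms
    by (intro sum.cong) (auto simp: test_potential_def)
  then show ?thesis
    by (simp add: sum_if_eq finite_neighbors mem_neighbors_iff_adj adj_def insert_commute)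
qed

lemma dirichlet_form_test_potential:
  assumes "i \<in> V" "j \<in> V" "i \<noteq> j"
  shows "dirichlet_form (test_potential i j t) (test_potential i j t)
    = of_bool (adj E i j) + real (card (neighbors E i - {j})) * (1 - t)^2
      + real (card (neighbors E j - {i})) * t^2"
proof -
  let ?u = "test_potential i j t"
  let ?L = "laplacian E ?u"
  \<comment> \<open>Since the values of L u sum to 0, only the deviations of u from t at i and j contribute.\<close>
  have "?u x * ?L x
      = t * ?L x + (if x = i then (1 - t) * ?L i else 0) - (if x = j then t * ?L j else 0)" for x
    using assms(3) by (auto simp: test_potential_def algebra_simps)
  then have "dirichlet_form ?u ?u = t * (\<Sum>x\<in>V. ?L x) + (1 - t) * ?L i - t * ?L j"
    using assms(1,2) finite_vertices
    by (simp add: dirichlet_form_def sum.distrib sum_subtractf sum_distrib_left)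
  then show ?thesis
    using assms(3)
    by (simp add: sum_laplacian_eq_0 laplacian_test_potential_source laplacian_test_potential_sink
        power2_eq_square algebra_simps)
qed

end

section \<open>Effective resistance in a connected graph\<close>

locale connected_ugraph = ugraph +
  assumes connected: "connected_graph V E"
begin

lemma laplacian_zero_imp_constant:
  assumes harmonic: "\<forall>x\<in>V. laplacian E u x = 0" and "x \<in> V" "y \<in> V"
  shows "u x = u y"
proof -
  have "(adj E)\<^sup>*\<^sup>* x y" using connected assms(2,3) by (simp add: connected_graph_def)
  then show ?thesis
  proof (induction rule: rtranclp_induct)
    case (step y z)
    then have "y \<in> V" "z \<in> neighbors E y"
      by (auto simp: adj_def neighbors_def dest: edge_endpoints)
    with step.IH show ?case using laplacian_zero_imp_eq_neighbor[OF harmonic] by simp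
  qed simp
qed

lemma degree_pos:
  assumes "x \<in> V" "y \<in> V" "x \<noteq> y"
  shows "degree E x > 0"
proof -
  have "(adj E)\<^sup>*\<^sup>* x y" using connected assms(1,2) by (simp add: connected_graph_def)
  then obtain z where "adj E x z" using assms(3) by (metis converse_rtranclpE)
  then have "neighbors E x \<noteq> {}" by (auto simp: mem_neighbors_iff_adj[symmetric])
  then show ?thesis by (simp add: Defs.degree_def finite_neighbors card_gt_0_iff)
qed

lemma degree_pos_of_card:
  assumes "card V \<ge> 2" "x \<in> V"
  shows "deg x > 0"
proof -
  have "\<not> card V \<le> Suc 0" using assms(1) by simp
  then obtain a b where "a \<in> V" "b \<in> V" "a \<noteq> b"
    using card_le_Suc0_iff_eq[OF finite_vertices] by blast
  then obtain y where "y \<in> V" "y \<noteq> x" by metis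
  then show ?thesis using degree_pos assms(2) by simp
qed

text \<open>The Laplacian has kernel the constants, so L + J, with J the all-ones matrix, is invertible.\<close>

lemma laplacian_solvable:
  assumes "(\<Sum>x\<in>V. b x) = 0"
  shows "\<exists>v. \<forall>x\<in>V. laplacian E v x = b x"
proof -
  let ?K = "\<lambda>x y. (if y = x then deg x else 0) - of_bool (y \<in> neighbors E x) + 1"
  have K: "(\<Sum>y\<in>V. ?K x y * v y) = laplacian E v x + (\<Sum>y\<in>V. v y)" if "x \<in> V" for x v
  proof -
    have "(\<Sum>y\<in>V. ?K x y * v y) = (\<Sum>y\<in>V. (if y = x then deg x * v y else 0)
        - (if y \<in> neighbors E x then v y else 0) + v y)"
      by (intro sum.cong) (auto simp: algebra_simps)
    also have "\<dots> = (\<Sum>y\<in>V. if y = x then deg x * v y else 0)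
        - (\<Sum>y\<in>V. if y \<in> neighbors E x then v y else 0) + (\<Sum>y\<in>V. v y)"
      by (simp only: sum.distrib sum_subtractf)
    also have "(\<Sum>y\<in>V. if y \<in> neighbors E x then v y else 0) = (\<Sum>y\<in>neighbors E x. v y)"
      using neighbors_subset finite_vertices by (simp add: sum.inter_restrict[symmetric] Int_absorb1)
    finally show ?thesis
      using that finite_vertices by (simp add: laplacian_def)
  qed
  have "\<exists>v. \<forall>x\<in>V. (\<Sum>y\<in>V. ?K x y * v y) = b x"
  proof (rule square_system_solvable[OF finite_vertices])
    fix v assume "\<forall>x\<in>V. (\<Sum>y\<in>V. ?K x y * v y) = 0"
    then have Lv: "\<forall>x\<in>V. laplacian E v x + (\<Sum>y\<in>V. v y) = 0" using K by simp
    then have sum0: "(\<Sum>y\<in>V. v y) = 0" by (rule sum_eq_0_if_laplacian_add_sum) simp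
    show "\<forall>x\<in>V. v x = 0"
    proof
      fix x assume x: "x \<in> V"
      have "v y = v x" if "y \<in> V" for y
        using Lv sum0 laplacian_zero_imp_constant[of v y x] that x by simp
      then have "(\<Sum>y\<in>V. v y) = real (card V) * v x" by simp
      with sum0 x finite_vertices show "v x = 0" by (auto simp: card_gt_0_iff)
    qed
  qed
  then obtain v where v: "\<forall>x\<in>V. laplacian E v x + (\<Sum>y\<in>V. v y) = b x" using K by auto
  with sum_eq_0_if_laplacian_add_sum[OF v assms] show ?thesis by auto
qed

lemma eff_res_eq:
  assumes v: "\<forall>x\<in>V. laplacian E v x = dipole i j x" and "i \<in> V" "j \<in> V"
  shows "eff_res V E i j = v i - v j"
  unfolding eff_res_def
proof (rule the_equality)
  show "\<exists>w. (\<forall>x\<in>V. laplacian E w x = (if x = i then 1 else 0) - (if x = j then 1 else 0))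
      \<and> v i - v j = w i - w j"
    using v unfolding dipole_def by blast
next
  fix r assume "\<exists>w. (\<forall>x\<in>V. laplacian E w x = (if x = i then 1 else 0) - (if x = j then 1 else 0))
      \<and> r = w i - w j"
  then obtain w where w: "\<forall>x\<in>V. laplacian E w x = dipole i j x" and r: "r = w i - w j"
    by (auto simp: dipole_def)
  have "\<forall>x\<in>V. laplacian E (\<lambda>x. v x - w x) x = 0"
    using v w laplacian_diff_scale[of v 1 w] by simp
  from laplacian_zero_imp_constant[OF this assms(2,3)] r show "r = v i - v j" by simp
qed

lemma eff_res_ge:
  assumes i: "i \<in> V" and j: "j \<in> V" and ij: "i \<noteq> j"
  shows "(real (degree E i) + real (degree E j) - 2 * of_bool (adj E i j))
    / (real (degree E i) * real (degree E j)) \<le> eff_res V E i j"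
proof -
  have "(\<Sum>x\<in>V. dipole i j x) = 0"
    using i j finite_vertices by (simp add: dipole_def sum_subtractf)
  then obtain v where v: "\<forall>x\<in>V. laplacian E v x = dipole i j x"
    using laplacian_solvable by blast
  have R: "eff_res V E i j = dirichlet_form v v"
    using eff_res_eq[OF v i j] dirichlet_form_dipole[OF v i j] by simp
  define c where "c = (of_bool (adj E i j) :: real)"
  define a where "a = real (card (neighbors E i - {j}))"
  define b where "b = real (card (neighbors E j - {i}))"
  have di: "real (degree E i) = a + c"
    using real_card_eq_card_Diff_singleton[OF finite_neighbors, of i j]
    by (simp add: a_def c_def Defs.degree_def mem_neighbors_iff_adj)
  have dj: "real (degree E j) = b + c"
    using real_card_eq_card_Diff_singleton[OF finite_neighbors, of j i]
    by (simp add: b_def c_def Defs.degree_def mem_neighbors_iff_adj adj_def insert_commute)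
  have "a + c > 0" "b + c > 0"
    using di dj degree_pos[OF i j ij] degree_pos[OF j i] ij by simp_all
  have "a \<ge> 0" "b \<ge> 0" "c = 0 \<or> c = 1" by (simp_all add: a_def b_def c_def)
  have bound_eq: "(real (degree E i) + real (degree E j) - 2 * of_bool (adj E i j))
      / (real (degree E i) * real (degree E j)) = (a + b) / ((a + c) * (b + c))"
    using di dj by (simp add: c_def)
  have "(a + b) / ((a + c) * (b + c)) \<le> eff_res V E i j"
  proof (cases "a + b = 0")
    case True
    then show ?thesis using R dirichlet_form_self_nonneg[of v] by simp
  next
    case False
    define t where "t = a / (a + b)"
    have "c + a * (1 - t)^2 + b * t^2 = (c * (a + b) + a * b) / (a + b)"
      using weighted_squares_at_balance[OF False] False by (simp add: t_def add_divide_distrib)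
    have denom_pos: "c * (a + b) + a * b > 0"
      using \<open>a \<ge> 0\<close> \<open>b \<ge> 0\<close> \<open>c = 0 \<or> c = 1\<close> \<open>a + c > 0\<close> \<open>b + c > 0\<close> False
      by (auto intro: add_pos_nonneg)
    define u where "u = test_potential i j t"
    have "dirichlet_form u u = (c * (a + b) + a * b) / (a + b)"
      using dirichlet_form_test_potential[OF i j ij, of t] \<open>c + a * (1 - t)^2 + b * t^2 = _\<close>
      by (simp add: u_def a_def b_def c_def)
    moreover have "dirichlet_form u v = 1"
      using dirichlet_form_dipole[OF v i j] ij by (simp add: u_def test_potential_def)
    ultimately have "(a + b) / (c * (a + b) + a * b) \<le> eff_res V E i j"
      using dirichlet_form_inverse_le[of u v] denom_pos False \<open>a \<ge> 0\<close> \<open>b \<ge> 0\<close> R by simp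
    moreover have "(a + b) / ((a + c) * (b + c)) \<le> (a + b) / (c * (a + b) + a * b)"
      using denom_pos \<open>a \<ge> 0\<close> \<open>b \<ge> 0\<close> \<open>a + c > 0\<close> \<open>b + c > 0\<close>
      by (intro divide_left_mono mult_pos_pos) (auto simp: algebra_simps)
    ultimately show ?thesis by simp
  qed
  then show ?thesis unfolding bound_eq .
qed

section \<open>Summing the pairwise bounds\<close>

lemma sum_sum_degree_ratio:
  assumes pos: "\<And>x. x \<in> V \<Longrightarrow> deg x > 0"
  shows "(\<Sum>i\<in>V. \<Sum>j\<in>V. (deg i + deg j)^2 / (deg i * deg j))
    = 2 * (\<Sum>x\<in>V. deg x) * (\<Sum>x\<in>V. 1 / deg x) + 2 * real (card V)^2"
proof -
  have "(deg i + deg j)^2 / (deg i * deg j) = deg i * (1 / deg j) + deg j * (1 / deg i) + 2"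
    if "i \<in> V" "j \<in> V" for i j
    using pos[OF that(1)] pos[OF that(2)] by (simp add: field_simps power2_eq_square)
  then have "(\<Sum>i\<in>V. \<Sum>j\<in>V. (deg i + deg j)^2 / (deg i * deg j))
      = (\<Sum>i\<in>V. \<Sum>j\<in>V. deg i * (1 / deg j)) + (\<Sum>i\<in>V. \<Sum>j\<in>V. deg j * (1 / deg i))
        + 2 * real (card V)^2"
    by (simp add: sum.distrib power2_eq_square)
  also have "(\<Sum>i\<in>V. \<Sum>j\<in>V. deg j * (1 / deg i)) = (\<Sum>i\<in>V. \<Sum>j\<in>V. deg i * (1 / deg j))"
    by (rule sum.swap)
  finally show ?thesis by (simp add: sum_product)
qed

lemma sum_sum_adjacent_degree_ratio:
  assumes pos: "\<And>x. x \<in> V \<Longrightarrow> deg x > 0"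
  shows "(\<Sum>i\<in>V. \<Sum>j\<in>V. of_bool (adj E i j) * (deg i + deg j) / (deg i * deg j))
    = 2 * real (card V)"
proof -
  have "(\<Sum>j\<in>V. of_bool (adj E i j) * (deg i + deg j) / (deg i * deg j))
      = (\<Sum>j\<in>neighbors E i. 1 / deg i + 1 / deg j)" if "i \<in> V" for i
  proof -
    have "(\<Sum>j\<in>V. of_bool (adj E i j) * (deg i + deg j) / (deg i * deg j))
        = (\<Sum>j\<in>V. if j \<in> neighbors E i then 1 / deg i + 1 / deg j else 0)"
      using pos[OF that] pos by (intro sum.cong) (auto simp: mem_neighbors_iff_adj field_simps)
    also have "\<dots> = (\<Sum>j\<in>neighbors E i. 1 / deg i + 1 / deg j)"
      using neighbors_subset finite_vertices by (simp add: sum.inter_restrict[symmetric] Int_absorb1)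
    finally show ?thesis .
  qed
  then have "(\<Sum>i\<in>V. \<Sum>j\<in>V. of_bool (adj E i j) * (deg i + deg j) / (deg i * deg j))
      = (\<Sum>i\<in>V. \<Sum>j\<in>neighbors E i. 1 / deg i) + (\<Sum>i\<in>V. \<Sum>j\<in>neighbors E i. 1 / deg j)"
    by (simp add: sum.distrib)
  also have "(\<Sum>i\<in>V. \<Sum>j\<in>neighbors E i. 1 / deg j) = (\<Sum>i\<in>V. \<Sum>j\<in>neighbors E i. 1 / deg i)"
    by (rule sum_neighbors_commute)
  also have "(\<Sum>i\<in>V. \<Sum>j\<in>neighbors E i. 1 / deg i) = (\<Sum>i\<in>V. 1)"
    using pos by (intro sum.cong) (auto simp: Defs.degree_def)
  finally show ?thesis by simp
qed

definition resistance_bound :: "'a \<Rightarrow> 'a \<Rightarrow> real" where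
  "resistance_bound i j
    = (deg i + deg j) * (deg i + deg j - 2 * of_bool (adj E i j)) / (deg i * deg j)"

lemma resistance_bound_commute: "resistance_bound i j = resistance_bound j i"
  by (simp add: resistance_bound_def adj_def insert_commute algebra_simps)

lemma resistance_bound_le:
  assumes "i \<in> V" "j \<in> V" "i \<noteq> j"
  shows "resistance_bound i j \<le> (deg i + deg j) * eff_res V E i j"
proof -
  have "resistance_bound i j
      = (deg i + deg j) * ((deg i + deg j - 2 * of_bool (adj E i j)) / (deg i * deg j))"
    by (simp add: resistance_bound_def)
  also have "\<dots> \<le> (deg i + deg j) * eff_res V E i j"
    by (rule mult_left_mono[OF eff_res_ge[OF assms]]) simp
  finally show ?thesis .
qed

lemma sum_resistance_bound:
  assumes "card V \<ge> 2"
  shows "((\<Sum>i\<in>V. \<Sum>j\<in>V. resistance_bound i j) - (\<Sum>i\<in>V. resistance_bound i i)) / 2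
    = (\<Sum>x\<in>V. deg x) * (\<Sum>x\<in>V. 1 / deg x) + real (card V)^2 - 4 * real (card V)"
proof -
  have pos: "deg x > 0" if "x \<in> V" for x
    using assms that by (rule degree_pos_of_card)
  have split: "resistance_bound i j = (deg i + deg j)^2 / (deg i * deg j)
      - 2 * (of_bool (adj E i j) * (deg i + deg j) / (deg i * deg j))" for i j
    by (simp add: resistance_bound_def power2_eq_square diff_divide_distrib algebra_simps)
  have diag: "resistance_bound i i = 4" if "i \<in> V" for i
    using pos[OF that] self_notin_neighbors[of i]
    by (simp add: resistance_bound_def mem_neighbors_iff_adj[symmetric] field_simps)
  have "(\<Sum>i\<in>V. \<Sum>j\<in>V. resistance_bound i j)
      = (\<Sum>i\<in>V. \<Sum>j\<in>V. (deg i + deg j)^2 / (deg i * deg j))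
        - 2 * (\<Sum>i\<in>V. \<Sum>j\<in>V. of_bool (adj E i j) * (deg i + deg j) / (deg i * deg j))"
    by (simp only: split sum_subtractf sum_distrib_left)
  moreover have "(\<Sum>i\<in>V. resistance_bound i i) = 4 * real (card V)"
    using diag by simp
  ultimately show ?thesis
    using sum_sum_degree_ratio[OF pos] sum_sum_adjacent_degree_ratio[OF pos] by simp
qed

end

lemma additive_degree_kirchhoff_ge:
  fixes V :: "'a::linorder set"
  assumes "connected_ugraph V E" and "card V \<ge> 2"
  shows "(\<Sum>x\<in>V. real (degree E x)) * (\<Sum>x\<in>V. 1 / real (degree E x))
      + real (card V)^2 - 4 * real (card V)
    \<le> additive_degree_kirchhoff V E"
proof -
  interpret connected_ugraph V E by fact
  have "(\<Sum>(i, j)\<in>{(i, j). i \<in> V \<and> j \<in> V \<and> i < j}. resistance_bound i j)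
      \<le> additive_degree_kirchhoff V E"
    unfolding additive_degree_kirchhoff_def
    by (intro sum_mono) (auto intro: resistance_bound_le)
  moreover have "(\<Sum>(i, j)\<in>{(i, j). i \<in> V \<and> j \<in> V \<and> i < j}. resistance_bound i j)
      = (\<Sum>x\<in>V. deg x) * (\<Sum>x\<in>V. 1 / deg x) + real (card V)^2 - 4 * real (card V)"
    using sum_ordered_pairs[OF finite_vertices, of resistance_bound] resistance_bound_commute
      sum_resistance_bound[OF assms(2)] by simp
  ultimately show ?thesis by simp
qed

theorem theorem2:
  fixes V :: "'a::linorder set" and E :: "'a set set" and N M :: nat
  assumes "simple_graph V E"
    and "connected_graph V E"
    and "N = card V"
    and "M < N"
    and "M \<le> card {v \<in> V. degree E v = 1}"
  shows "additive_degree_kirchhoff V E \<ge>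
    real N * (real N - 4) + 2 * real (card E) *
      (real M + (real N - real M)^2 / (2 * real (card E) - real M))"
proof -
  have "connected_ugraph V E" using assms(1,2) by unfold_locales
  interpret connected_ugraph V E by fact
  show ?thesis
  proof (cases "card V \<ge> 2")
    case False
    then have "card V = 1" using assms(3,4) by simp
    then obtain a where "V = {a}" by (auto simp: card_1_singleton_iff)
    have "E = {}" using assms(1) \<open>V = {a}\<close> by (auto simp: simple_graph_def)
    moreover have pairs: "{(i, j). i \<in> V \<and> j \<in> V \<and> i < j} = {}" using \<open>V = {a}\<close> by auto
    have "additive_degree_kirchhoff V E = 0" unfolding additive_degree_kirchhoff_def pairs by simp
    ultimately show ?thesis using assms(3,4) \<open>card V = 1\<close> by simp
  next
    case True
    obtain P where P: "P \<subseteq> {v \<in> V. degree E v = 1}" "card P = M"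
      using obtain_subset_with_card_n[OF assms(5)] by metis
    have D: "(\<Sum>x\<in>V. deg x) = 2 * real (card E)"
      using sum_degree_eq_two_card_edges by (metis of_nat_mult of_nat_numeral of_nat_sum)
    have "real M + (real N - real M)^2 / (2 * real (card E) - real M) \<le> (\<Sum>x\<in>V. 1 / deg x)"
      using sum_inverse_ge_with_pendants[OF finite_vertices, of deg P] P True assms(3,4) D
        degree_pos_of_card by fastforce
    from mult_left_mono[OF this, of "2 * real (card E)"]
    show ?thesis using additive_degree_kirchhoff_ge[OF \<open>connected_ugraph V E\<close> True] D assms(3)
      by (simp add: power2_eq_square algebra_simps)
  qed
qed

end
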